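(* Let $M$ be the torus and suppose a $2,\!6$-quadrangulation of $M$ is given, i.e. a map on $M$ all of whose faces are quadrilaterals, in which every vertex has degree $4$ except for exactly two vertices, one of degree $2$ and one of degree $6$. Then the edges of this quadrangulation cannot be colored with two colors such that colors alternate around each face (equivalently, around each vertex).
   Context: A map on a closed connected surface $M$ is an embedding of a finite graph $G$ in $M$ such that every face (connected component of $M\smallsetminus G$) is an open disk. Here a graph is a one-dimensional cell complex, so loops and multiple edges are allowed. A face is a $k$-gon if its boundary walk has $k$ edges (counted with multiplicity). A quadrangulation is a map all of whose faces are quadrilaterals. The degree of a vertex counts edge-ends (a loop contributes $2$). *)

theory Defs
  imports Main
begin

text \<open>Combinatorial (rotation-system) encoding of maps on closed connected
orientable surfaces. A map is given by a finite set of darts D (half-edges),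
a fixed-point-free involution alpha on D (the two ends of an edge) and a
permutation sigma of D (cyclic order of darts around each vertex).
Vertices = sigma-orbits, edges = alpha-orbits, faces = orbits of
phi = sigma o alpha (the boundary walks). The degree of a vertex is the size
of its sigma-orbit (a loop contributes 2), the length of a face is the size of
its phi-orbit.\<close>

definition orb :: "('a \<Rightarrow> 'a) \<Rightarrow> 'a \<Rightarrow> 'a set" where
  "orb f x = {(f ^^ n) x | n. True}"

definition orbits :: "('a \<Rightarrow> 'a) \<Rightarrow> 'a set \<Rightarrow> 'a set set" where
  "orbits f D = orb f ` D"

definition face_perm :: "('a \<Rightarrow> 'a) \<Rightarrow> ('a \<Rightarrow> 'a) \<Rightarrow> 'a \<Rightarrow> 'a" where
  "face_perm \<alpha> \<sigma> = \<sigma> \<circ> \<alpha>"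

text \<open>Darts reachable from x by words in alpha and sigma (both are permutations
of a finite set, so forward iteration suffices).\<close>
inductive_set reach :: "('a \<Rightarrow> 'a) \<Rightarrow> ('a \<Rightarrow> 'a) \<Rightarrow> 'a \<Rightarrow> 'a set"
  for \<alpha> \<sigma> x where
  start: "x \<in> reach \<alpha> \<sigma> x"
| step_a: "y \<in> reach \<alpha> \<sigma> x \<Longrightarrow> \<alpha> y \<in> reach \<alpha> \<sigma> x"
| step_s: "y \<in> reach \<alpha> \<sigma> x \<Longrightarrow> \<sigma> y \<in> reach \<alpha> \<sigma> x"

definition comb_map :: "'a set \<Rightarrow> ('a \<Rightarrow> 'a) \<Rightarrow> ('a \<Rightarrow> 'a) \<Rightarrow> bool" where
  "comb_map D \<alpha> \<sigma> \<longleftrightarrow>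
     finite D \<and> D \<noteq> {} \<and>
     (\<forall>d\<in>D. \<alpha> d \<in> D \<and> \<alpha> d \<noteq> d \<and> \<alpha> (\<alpha> d) = d) \<and>
     bij_betw \<sigma> D D \<and>
     (\<forall>d\<in>D. reach \<alpha> \<sigma> d = D)"

definition euler_char :: "'a set \<Rightarrow> ('a \<Rightarrow> 'a) \<Rightarrow> ('a \<Rightarrow> 'a) \<Rightarrow> int" where
  "euler_char D \<alpha> \<sigma> =
     int (card (orbits \<sigma> D)) - int (card (orbits \<alpha> D))
     + int (card (orbits (face_perm \<alpha> \<sigma>) D))"

definition torus_map :: "'a set \<Rightarrow> ('a \<Rightarrow> 'a) \<Rightarrow> ('a \<Rightarrow> 'a) \<Rightarrow> bool" where
  "torus_map D \<alpha> \<sigma> \<longleftrightarrow> comb_map D \<alpha> \<sigma> \<and> euler_char D \<alpha> \<sigma> = 0"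

definition quadrangulation :: "'a set \<Rightarrow> ('a \<Rightarrow> 'a) \<Rightarrow> ('a \<Rightarrow> 'a) \<Rightarrow> bool" where
  "quadrangulation D \<alpha> \<sigma> \<longleftrightarrow> (\<forall>f\<in>orbits (face_perm \<alpha> \<sigma>) D. card f = 4)"

definition degrees_2_6 :: "'a set \<Rightarrow> ('a \<Rightarrow> 'a) \<Rightarrow> bool" where
  "degrees_2_6 D \<sigma> \<longleftrightarrow>
     (\<exists>u\<in>orbits \<sigma> D. \<exists>w\<in>orbits \<sigma> D.
        card u = 2 \<and> card w = 6 \<and>
        (\<forall>v\<in>orbits \<sigma> D. v \<noteq> u \<longrightarrow> v \<noteq> w \<longrightarrow> card v = 4))"

text \<open>A 2-colouring of the edges (a colouring of darts constant on alpha-orbits)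
whose colours alternate along every face boundary walk.\<close>
definition face_alternating_2col :: "'a set \<Rightarrow> ('a \<Rightarrow> 'a) \<Rightarrow> ('a \<Rightarrow> 'a) \<Rightarrow> ('a \<Rightarrow> bool) \<Rightarrow> bool" where
  "face_alternating_2col D \<alpha> \<sigma> c \<longleftrightarrow>
     (\<forall>d\<in>D. c (\<alpha> d) = c d) \<and> (\<forall>d\<in>D. c (face_perm \<alpha> \<sigma> d) \<noteq> c d)"

end

theory Submission
  imports Defs
begin

text \<open>
  Colour every dart by the colour of its edge. Alternation around the faces implies alternation
  around the vertices, so \<open>\<sigma>\<^sup>2\<close> and \<open>\<phi>\<^sup>2\<close> preserve the class \<open>S\<close> of darts of one colour;
  on \<open>S\<close> consider the permutation \<open>W = \<sigma>\<^sup>2\<alpha>\<close>.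

  The involution \<open>\<phi>\<^sup>2\<close> conjugates \<open>W\<close> to its inverse and maps no \<open>W\<close>-cycle to itself, so for
  every \<open>n\<close> the \<open>W\<close>-cycles of length \<open>n\<close> come in pairs. Away from the two special vertices
  \<open>\<sigma>\<^sup>2\<close> is an involution, so \<open>\<alpha>\<close> also conjugates \<open>W\<close> to its inverse there; since the vertex of
  degree 2 gives \<open>\<sigma>\<^sup>2\<close> only one fixed point in \<open>S\<close>, \<open>\<alpha>\<close> pairs up the \<open>W\<close>-cycles avoiding the
  vertex of degree 6 as well. Hence the at most three \<open>W\<close>-cycles through \<open>\<alpha> t\<^sub>1, \<alpha> t\<^sub>2, \<alpha> t\<^sub>3\<close>,
  where \<open>t\<^sub>1 \<mapsto> t\<^sub>2 \<mapsto> t\<^sub>3\<close> is the 3-cycle of \<open>\<sigma>\<^sup>2\<close> at the vertex of degree 6, also come in pairs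
  of equal length: two of them coincide and the third has the same length. But the third one is
  strictly shorter, because \<open>\<alpha>\<close> maps it onto the cycle of \<open>\<sigma>\<^sup>-\<^sup>2\<alpha>\<close> through \<open>\<alpha> t\<^sub>1\<close>,
  which is the \<open>W\<close>-cycle through \<open>\<alpha> t\<^sub>1\<close> and \<open>\<alpha> t\<^sub>2\<close> with the arc between them cut out.
\<close>

section \<open>Orbits of a permutation of a finite set\<close>

definition period :: "('a \<Rightarrow> 'a) \<Rightarrow> 'a \<Rightarrow> nat" where
  "period g x = (LEAST k. 0 < k \<and> (g ^^ k) x = x)"

lemma period_le: "0 < k \<Longrightarrow> (g ^^ k) x = x \<Longrightarrow> period g x \<le> k"
  unfolding period_def by (rule Least_le) simp

lemma funpow_in_orb: "(g ^^ n) x \<in> orb g x"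
  by (auto simp: orb_def)

lemma self_in_orb: "x \<in> orb g x"
  using funpow_in_orb [where n = 0] by simp

lemma step_in_orb: "g x \<in> orb g x"
  using funpow_in_orb [where n = 1] by simp

lemma orb_subset_if_mem: "y \<in> orb g x \<Longrightarrow> orb g y \<subseteq> orb g x"
  by (auto simp: orb_def funpow_add[symmetric, THEN fun_cong, simplified])

lemma funpow_shortcut:
  assumes "h a = g c" "(g ^^ b) c = a" "0 < b"
    "\<forall>j. 0 < j \<longrightarrow> j < b \<longrightarrow> h ((g ^^ j) c) = g ((g ^^ j) c)"
  shows "(h ^^ b) a = a"
proof -
  have "0 < j \<longrightarrow> j \<le> b \<longrightarrow> (h ^^ j) a = (g ^^ j) c" for j
  proof (induction j)
    case (Suc j)
    show ?case
    proof (cases "j = 0")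
      case False
      then show ?thesis using Suc assms(4) by auto
    qed (simp add: assms(1))
  qed simp
  then show ?thesis using assms(2,3) by simp
qed

locale finite_bij =
  fixes g :: "'a \<Rightarrow> 'a" and S :: "'a set"
  assumes finite: "finite S" and bij: "bij_betw g S S"
begin

lemma funpow_in_S: "x \<in> S \<Longrightarrow> (g ^^ n) x \<in> S"
  using bij_betw_apply [OF bij_betw_funpow [OF bij]] .

lemma in_S: "x \<in> S \<Longrightarrow> g x \<in> S"
  using funpow_in_S [of x 1] by simp

lemma inj_on_funpow: "inj_on (g ^^ n) S"
  using bij_betw_funpow [OF bij] by (rule bij_betw_imp_inj_on)

lemma orb_subset: "x \<in> S \<Longrightarrow> orb g x \<subseteq> S"
  by (auto simp: orb_def funpow_in_S)

lemma cancel: "x \<in> S \<Longrightarrow> y \<in> S \<Longrightarrow> g x = g y \<Longrightarrow> x = y"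
  using bij_betw_imp_inj_on [OF bij] by (auto dest: inj_onD)

lemma funpow_cancel: "x \<in> S \<Longrightarrow> y \<in> S \<Longrightarrow> (g ^^ n) x = (g ^^ n) y \<Longrightarrow> x = y"
  using inj_on_funpow by (auto dest: inj_onD)

lemma funpow_returns: assumes "x \<in> S" shows "\<exists>k>0. (g ^^ k) x = x"
proof -
  have "\<not> inj_on (\<lambda>n. (g ^^ n) x) {..card S}"
  proof
    assume "inj_on (\<lambda>n. (g ^^ n) x) {..card S}"
    then have "card {..card S} \<le> card S"
      using finite funpow_in_S [OF assms] by (intro card_inj_on_le) auto
    then show False by simp
  qed
  then obtain a b where ab: "a \<noteq> b" "(g ^^ a) x = (g ^^ b) x" by (auto simp: inj_on_def)
  define i j where "i = min a b" and "j = max a b"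
  have "i < j" "(g ^^ i) x = (g ^^ j) x"
    using ab by (auto simp: i_def j_def min_def max_def)
  then have "(g ^^ i) ((g ^^ (j - i)) x) = (g ^^ i) x"
    by (simp add: funpow_add [symmetric, THEN fun_cong, simplified])
  then have "(g ^^ (j - i)) x = x" by (rule funpow_cancel [OF funpow_in_S [OF assms] assms])
  with \<open>i < j\<close> show ?thesis by (intro exI [of _ "j - i"]) simp
qed

lemma period_pos: "x \<in> S \<Longrightarrow> 0 < period g x"
  and funpow_period: "x \<in> S \<Longrightarrow> (g ^^ period g x) x = x"
  using LeastI_ex [OF funpow_returns] by (auto simp: period_def)

lemma funpow_eq_self_iff: assumes "x \<in> S" shows "(g ^^ n) x = x \<longleftrightarrow> period g x dvd n"
proof
  assume "(g ^^ n) x = x"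
  then have "(g ^^ (n mod period g x)) x = x"
    using funpow_mod_eq [OF funpow_period [OF assms]] by simp
  moreover have "n mod period g x < period g x"
    using period_pos [OF assms] by simp
  ultimately have "n mod period g x = 0"
    using period_le [of "n mod period g x" g x] by (metis neq0_conv not_le)
  then show "period g x dvd n" by (simp add: dvd_eq_mod_eq_0)
next
  assume "period g x dvd n"
  then show "(g ^^ n) x = x"
    using funpow_mod_eq [OF funpow_period [OF assms], of n] by (simp add: dvd_eq_mod_eq_0)
qed

lemma orb_eq_image_period: assumes "x \<in> S"
  shows "orb g x = (\<lambda>k. (g ^^ k) x) ` {..<period g x}"
proof -
  have "(g ^^ n) x = (g ^^ (n mod period g x)) x" for n
    using funpow_mod_eq [OF funpow_period [OF assms]] by simp
  then show ?thesis
    using period_pos [OF assms] by (force simp: orb_def)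
qed

lemma inj_on_funpow_period: assumes "x \<in> S" shows "inj_on (\<lambda>k. (g ^^ k) x) {..<period g x}"
  using funpow_period [OF assms] unfolding lessThan_atLeast0
  by (intro inj_on_funpow_least) (auto dest: period_le)

lemma card_orb: "x \<in> S \<Longrightarrow> card (orb g x) = period g x"
  by (simp add: orb_eq_image_period card_image inj_on_funpow_period)

lemma orb_eq_if_mem: assumes "x \<in> S" "y \<in> orb g x" shows "orb g y = orb g x"
proof
  obtain m where y: "y = (g ^^ m) x" using assms(2) by (auto simp: orb_def)
  have "(g ^^ (m * period g x - m)) y = (g ^^ (m * period g x)) x"
    using period_pos [OF assms(1)] by (simp add: y funpow_add [symmetric, THEN fun_cong, simplified])
  also have "\<dots> = x" using assms(1) by (simp add: funpow_eq_self_iff)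
  finally have "x \<in> orb g y" by (metis funpow_in_orb)
  then show "orb g x \<subseteq> orb g y" by (rule orb_subset_if_mem)
qed (rule orb_subset_if_mem [OF assms(2)])

lemma period_eq_if_mem: "x \<in> S \<Longrightarrow> y \<in> orb g x \<Longrightarrow> period g y = period g x"
  using card_orb orb_eq_if_mem orb_subset by (metis subsetD)

lemma funpow_period_pred: assumes "x \<in> S" shows "g ((g ^^ (period g x - 1)) x) = x"
  using period_pos [OF assms] funpow_period [OF assms]
  by (metis Suc_pred' funpow.simps(2) o_apply)

lemma mem_orb_step: assumes "x \<in> S" shows "x \<in> orb g (g x)"
proof -
  have "(g ^^ (period g x - 1)) (g x) = x"
    using funpow_period_pred [OF assms] by (simp add: funpow_swap1)
  then show ?thesis by (metis funpow_in_orb)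
qed

lemma funpow_eq_below_period:
  assumes "x \<in> S" "i < period g x" "j < period g x" "(g ^^ i) x = (g ^^ j) x"
  shows "i = j"
  using inj_on_funpow_period [OF assms(1)] assms(2-4) by (auto dest: inj_onD)

text \<open>The hypothesis \<open>g (R (g y)) = R y\<close> on the cycle of \<open>x\<close> says that \<open>R\<close> reverses it.\<close>

lemma reversal_funpow:
  assumes "x \<in> S" "\<forall>y\<in>S. R y \<in> S" "\<forall>y\<in>orb g x. g (R (g y)) = R y"
    "R x = (g ^^ k) x" "j \<le> k"
  shows "R ((g ^^ j) x) = (g ^^ (k - j)) x"
proof -
  have unwind: "(g ^^ i) (R ((g ^^ i) x)) = R x" for i
  proof (induction i)
    case (Suc i)
    have "(g ^^ Suc i) (R ((g ^^ Suc i) x)) = (g ^^ i) (g (R (g ((g ^^ i) x))))"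
      unfolding funpow_Suc_right [of i g, THEN fun_cong, of "R ((g ^^ Suc i) x)", unfolded o_apply]
      by simp
    also have "g (R (g ((g ^^ i) x))) = R ((g ^^ i) x)"
      using assms(3) by (simp add: funpow_in_orb)
    finally show ?case using Suc.IH by (rule trans)
  qed simp
  have "(g ^^ j) (R ((g ^^ j) x)) = R x" by (rule unwind)
  also have "\<dots> = (g ^^ (j + (k - j))) x" using assms(4,5) by simp
  also have "\<dots> = (g ^^ j) ((g ^^ (k - j)) x)"
    by (simp only: funpow_add o_apply)
  finally have "(g ^^ j) (R ((g ^^ j) x)) = (g ^^ j) ((g ^^ (k - j)) x)" .
  then show ?thesis
    by (rule funpow_cancel [rotated 2]) (use assms(1,2) funpow_in_S in blast)+
qed

lemma reversal_fixed_edge: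
  assumes "x \<in> S" "\<forall>y\<in>S. R y \<in> S" "\<forall>y\<in>orb g x. g (R (g y)) = R y"
    "R x = (g ^^ k) x" "\<forall>y\<in>orb g x. R y \<noteq> y"
  shows "odd k" and "R ((g ^^ (k div 2)) x) = g ((g ^^ (k div 2)) x)"
proof -
  have R_mid: "R ((g ^^ (k div 2)) x) = (g ^^ (k - k div 2)) x"
    using reversal_funpow [OF assms(1-4)] by simp
  show "odd k"
  proof
    assume "even k"
    then have "k - k div 2 = k div 2" by presburger
    then show False using R_mid assms(5) funpow_in_orb by metis
  qed
  then have "k - k div 2 = Suc (k div 2)" by presburger
  with R_mid show "R ((g ^^ (k div 2)) x) = g ((g ^^ (k div 2)) x)" by simp
qed

lemma reversal_two_fixed_edges:
  assumes "x \<in> S" "\<forall>y\<in>S. R y \<in> S" "\<forall>y\<in>orb g x. g (R (g y)) = R y"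
    "R x \<in> orb g x" "\<forall>y\<in>orb g x. R y \<noteq> y"
  obtains y y' where "y \<in> orb g x" "y' \<in> orb g x" "y \<noteq> y'" "R y = g y" "R y' = g y'"
proof -
  obtain k where "R x = (g ^^ k) x" using assms(4) by (auto simp: orb_def)
  define y where "y = (g ^^ (k div 2)) x"
  have y: "y \<in> orb g x" "y \<in> S" "R y = g y"
    using reversal_fixed_edge [OF assms(1-3) \<open>R x = _\<close> assms(5)] funpow_in_orb funpow_in_S [OF assms(1)]
    by (auto simp: y_def)
  \<comment> \<open>The second edge comes from the same argument based at \<open>g y\<close>, where \<open>R (g y) = y\<close>.\<close>
  define z where "z = g y"
  define n where "n = period g z"
  have "z \<in> orb g x"
    using orb_subset_if_mem [OF y(1)] step_in_orb [of g y] by (auto simp: z_def)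
  then have z: "z \<in> S" "orb g z = orb g x"
    using orb_eq_if_mem [OF assms(1)] orb_subset [OF assms(1)] by auto
  have "R z \<in> S" using assms(2) z(1) by blast
  have "g (R z) = g y" using assms(3) y(1,3) by (simp add: z_def)
  then have Rz: "R z = y" by (rule cancel [OF \<open>R z \<in> S\<close> y(2)])
  have "g ((g ^^ (n - 1)) z) = g y" using funpow_period_pred [OF z(1)] by (simp add: n_def z_def)
  then have y_from_z: "(g ^^ (n - 1)) z = y" by (rule cancel [OF funpow_in_S [OF z(1)] y(2)])
  define j where "j = (n - 1) div 2"
  note edge = reversal_fixed_edge [OF z(1) assms(2), unfolded z(2),
      OF assms(3) Rz [folded y_from_z] assms(5)]
  have "n - 1 < n" "j < n" using period_pos [OF z(1)] by (simp_all add: n_def j_def)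
  have "(g ^^ j) z \<noteq> y"
  proof
    assume "(g ^^ j) z = y"
    then have "j = n - 1"
      using funpow_eq_below_period [OF z(1), folded n_def] \<open>n - 1 < n\<close> \<open>j < n\<close> y_from_z
      by metis
    then show False using edge(1) by (simp add: j_def)
  qed
  moreover have "(g ^^ j) z \<in> orb g x" using funpow_in_orb [of j g z] z(2) by simp
  moreover have "R ((g ^^ j) z) = g ((g ^^ j) z)" using edge(2) by (simp add: j_def)
  ultimately show ?thesis using that [OF y(1) _ _ y(3)] by blast
qed

lemma shortcut_returns:
  assumes "c \<in> S" "a \<in> orb g c" "a \<noteq> c" "h a = g c"
    "\<forall>y\<in>orb g c. y \<noteq> a \<longrightarrow> y \<noteq> c \<longrightarrow> h y = g y"
  obtains b where "0 < b" "b < period g c" "(h ^^ b) a = a"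
proof -
  obtain m where m: "m < period g c" "(g ^^ m) c = a"
    using assms(2) orb_eq_image_period [OF assms(1)] by auto
  define b where "b = (LEAST j. (g ^^ j) c = a)"
  have b: "(g ^^ b) c = a" "b \<le> m" unfolding b_def using m(2) by (auto intro: LeastI Least_le)
  have "0 < b" using b(1) assms(3) by (cases b) auto
  have "\<forall>j. 0 < j \<longrightarrow> j < b \<longrightarrow> h ((g ^^ j) c) = g ((g ^^ j) c)"
  proof (intro allI impI)
    fix j assume j: "0 < j" "j < b"
    have "(g ^^ j) c \<noteq> a" using j(2) unfolding b_def by (rule not_less_Least)
    moreover have "(g ^^ j) c \<noteq> c"
      using funpow_eq_self_iff [OF assms(1)] j b(2) m(1) by (auto dest: dvd_imp_le)
    ultimately show "h ((g ^^ j) c) = g ((g ^^ j) c)" using assms(5) funpow_in_orb [of j g c] by simp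
  qed
  with assms(4) b(1) \<open>0 < b\<close> have "(h ^^ b) a = a" by (rule funpow_shortcut)
  moreover have "b < period g c" using b(2) m(1) by simp
  ultimately show ?thesis using \<open>0 < b\<close> that by blast
qed

end

lemma image_orb_if_reversing:
  assumes "finite_bij g S" "finite_bij h S" "\<forall>y\<in>S. R y \<in> S" "x \<in> S"
    "\<forall>y\<in>orb g x. h (R (g y)) = R y"
  shows "R ` orb g x = orb h (R x)"
proof -
  interpret g: finite_bij g S by fact
  interpret h: finite_bij h S by fact
  have "R ((g ^^ n) x) \<in> orb h (R x)" for n
  proof (induction n)
    case (Suc n)
    let ?y = "(g ^^ n) x"
    have "R (g ?y) \<in> S" using assms(3) g.in_S [OF g.funpow_in_S [OF assms(4)]] by blast
    then have "R (g ?y) \<in> orb h (h (R (g ?y)))" by (rule h.mem_orb_step)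
    also have "h (R (g ?y)) = R ?y" using assms(5) by (simp add: funpow_in_orb)
    finally show ?case using orb_subset_if_mem [OF Suc.IH] by auto
  qed (simp add: self_in_orb)
  moreover have "(h ^^ n) (R x) \<in> R ` orb g x" for n
  proof (induction n)
    case (Suc n)
    then obtain v where v: "v \<in> orb g x" "(h ^^ n) (R x) = R v" by auto
    define v' where "v' = (g ^^ (period g v - 1)) v"
    have "v \<in> S" using v(1) g.orb_subset [OF assms(4)] by blast
    then have "g v' = v" unfolding v'_def by (rule g.funpow_period_pred)
    have "v' \<in> orb g x"
      using funpow_in_orb [of _ g v] orb_subset_if_mem [OF v(1)] by (auto simp: v'_def)
    have "(h ^^ Suc n) (R x) = h (R (g v'))" using v(2) \<open>g v' = v\<close> by simp
    also have "\<dots> = R v'" using assms(5) \<open>v' \<in> orb g x\<close> by simp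
    finally show ?case using \<open>v' \<in> orb g x\<close> by simp
  qed (simp add: self_in_orb)
  ultimately show ?thesis by (auto simp: orb_def)
qed

section \<open>Pairing cycles of equal length\<close>

lemma even_card_if_fixpoint_free_involution:
  assumes "finite A" "\<forall>x\<in>A. f x \<in> A \<and> f x \<noteq> x \<and> f (f x) = x"
  shows "even (card A)"
  using assms
proof (induction "card A" arbitrary: A rule: less_induct)
  case less
  show ?case
  proof (cases "A = {}")
    case False
    then obtain x where x: "x \<in> A" by blast
    let ?B = "A - {x, f x}"
    have pair: "{x, f x} \<subseteq> A" "card {x, f x} = 2" using less.prems(2) x by auto
    then have card_B: "card ?B + 2 = card A"
      using card_Diff_subset [OF _ pair(1)] card_mono [OF less.prems(1) pair(1)] by simp
    have "\<forall>y\<in>?B. f y \<in> ?B \<and> f y \<noteq> y \<and> f (f y) = y"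
    proof
      fix y assume y: "y \<in> ?B"
      then have "f y \<in> A" "f y \<noteq> y" "f (f y) = y" "f (f x) = x"
        using less.prems(2) x by auto
      moreover from this have "f y \<noteq> x" "f y \<noteq> f x" using y by auto
      ultimately show "f y \<in> ?B \<and> f y \<noteq> y \<and> f (f y) = y" by simp
    qed
    then have "even (card ?B)"
      by (intro less.hyps [of ?B]) (use less.prems(1) card_B in auto)
    then show ?thesis using card_B by (metis even_add even_numeral)
  qed simp
qed

lemma even_card_size_class_if_swapped:
  assumes "finite F" "\<forall>Z\<in>F. Z \<subseteq> S" "\<forall>x\<in>S. R x \<in> S \<and> R (R x) = x"
    "\<forall>Z\<in>F. R ` Z \<in> F \<and> R ` Z \<noteq> Z"
  shows "even (card {Z \<in> F. card Z = n})"
proof (rule even_card_if_fixpoint_free_involution [where f = "image R"])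
  have "inj_on R S" by (rule inj_onI) (metis assms(3))
  then have "card (R ` Z) = card Z" if "Z \<in> F" for Z
    using assms(2) that by (blast intro: card_image inj_on_subset)
  moreover have "R ` R ` Z = Z" if "Z \<in> F" for Z
    using assms(2,3) that by (force simp: image_image)
  ultimately show "\<forall>Z\<in>{Z \<in> F. card Z = n}. R ` Z \<in> {Z \<in> F. card Z = n} \<and> R ` Z \<noteq> Z \<and> R ` R ` Z = Z"
    using assms(4) by auto
qed (use assms(1) in simp)

lemma even_card_if_even_size_classes:
  assumes "finite B" "\<forall>n. even (card {Z \<in> B. f Z = n})"
  shows "even (card B)"
proof -
  have "card B = (\<Sum>n\<in>f ` B. card {Z \<in> B. f Z = n})"
    using sum.image_gen [OF assms(1), of "\<lambda>_. 1 :: nat" f] by simp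
  then show ?thesis using assms(2) by (simp add: dvd_sum)
qed

lemma three_sets_even_size_classes:
  assumes "\<forall>n. even (card {Z \<in> {X1, X2, X3}. f Z = n})"
  shows "(X1 = X2 \<and> X3 \<noteq> X1 \<and> f X3 = f X1) \<or> (X2 = X3 \<and> X1 \<noteq> X2 \<and> f X1 = f X2)
    \<or> (X3 = X1 \<and> X2 \<noteq> X3 \<and> f X2 = f X3)"
proof -
  have even: "even (card {X1, X2, X3})"
    by (rule even_card_if_even_size_classes) (use assms in auto)
  have pair: "f Y = f X" if "{X1, X2, X3} = {X, Y}" "X \<noteq> Y" for X Y
  proof (rule ccontr)
    assume "f Y \<noteq> f X"
    then have "{Z \<in> {X1, X2, X3}. f Z = f X} = {X}" using that(1,2) by auto
    then show False using assms [rule_format, of "f X"] by simp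
  qed
  have "X1 = X2 \<or> X2 = X3 \<or> X3 = X1" using even by (auto simp: card_insert_if split: if_splits)
  moreover have "\<not> (X1 = X2 \<and> X2 = X3)" using even by auto
  ultimately consider "X1 = X2" "X3 \<noteq> X1" | "X2 = X3" "X1 \<noteq> X2" | "X3 = X1" "X2 \<noteq> X3"
    by blast
  then show ?thesis
  proof cases
    case 1
    then show ?thesis using pair [of X1 X3] by auto
  next
    case 2
    then show ?thesis using pair [of X2 X1] by auto
  next
    case 3
    then show ?thesis using pair [of X3 X2] by auto
  qed
qed

section \<open>Darts of one colour\<close>

text \<open>In the application, \<open>S\<close> is a colour class of darts, \<open>A = \<alpha>\<close> and \<open>\<psi> = \<sigma>\<^sup>2\<close>; the
  involution \<open>Q\<close> reversing \<open>W\<close> below is \<open>\<phi>\<^sup>2\<close>.\<close>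

locale dart_system =
  fixes S :: "'a set" and A \<psi> :: "'a \<Rightarrow> 'a"
  assumes finite: "finite S"
    and A_in: "x \<in> S \<Longrightarrow> A x \<in> S"
    and A_neq: "x \<in> S \<Longrightarrow> A x \<noteq> x"
    and A_A: "x \<in> S \<Longrightarrow> A (A x) = x"
    and \<psi>_bij: "bij_betw \<psi> S S"
begin

definition W :: "'a \<Rightarrow> 'a" where
  "W x = \<psi> (A x)"

lemma A_bij: "bij_betw A S S"
  by (rule bij_betw_byWitness [where f' = A]) (auto simp: A_in A_A)

sublocale W: finite_bij W S
proof
  show "bij_betw W S S"
    using bij_betw_trans [OF A_bij \<psi>_bij] by (simp add: W_def [abs_def] comp_def)
qed (rule finite)

lemma A_cancel: "x \<in> S \<Longrightarrow> y \<in> S \<Longrightarrow> A x = A y \<Longrightarrow> x = y"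
  by (metis A_A)

lemma even_card_cycles_if_reversed:
  assumes Q: "\<forall>x\<in>S. Q x \<in> S \<and> Q (Q x) = x \<and> Q x \<noteq> x \<and> Q x \<noteq> W x \<and> W (Q (W x)) = Q x"
  shows "even (card {Z \<in> orbits W S. card Z = n})"
proof (rule even_card_size_class_if_swapped [where R = Q])
  show "\<forall>Z\<in>orbits W S. Q ` Z \<in> orbits W S \<and> Q ` Z \<noteq> Z"
  proof (intro ballI conjI)
    fix Z assume "Z \<in> orbits W S"
    then obtain x where x: "x \<in> S" "Z = orb W x" by (auto simp: orbits_def)
    have in_S: "y \<in> S" if "y \<in> orb W x" for y using W.orb_subset [OF x(1)] that by blast
    have rev: "\<forall>y\<in>orb W x. W (Q (W y)) = Q y" using Q in_S by simp
    have QZ: "Q ` Z = orb W (Q x)"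
      unfolding x(2) using Q x(1) rev
      by (intro image_orb_if_reversing [OF W.finite_bij_axioms W.finite_bij_axioms]) simp_all
    then show "Q ` Z \<in> orbits W S" using Q x(1) by (simp add: orbits_def)
    show "Q ` Z \<noteq> Z"
    proof
      assume "Q ` Z = Z"
      then have "Q x \<in> orb W x" using x(2) self_in_orb [of x W] by (metis imageI)
      moreover have "\<forall>y\<in>orb W x. Q y \<noteq> y" "\<forall>y\<in>S. Q y \<in> S" using Q in_S by simp_all
      ultimately obtain y where "y \<in> orb W x" "Q y = W y"
        using W.reversal_two_fixed_edges [OF x(1) _ rev] by metis
      then show False using Q in_S by simp
    qed
  qed
  show "finite (orbits W S)" by (simp add: orbits_def finite)
  show "\<forall>Z\<in>orbits W S. Z \<subseteq> S" using W.orb_subset by (auto simp: orbits_def)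
  show "\<forall>x\<in>S. Q x \<in> S \<and> Q (Q x) = x" using Q by simp
qed

lemma \<psi>_in: "x \<in> S \<Longrightarrow> \<psi> x \<in> S"
  using \<psi>_bij by (rule bij_betw_apply)

lemma A_reverses_avoiding_cycle:
  assumes "\<forall>x\<in>S - E. \<psi> (\<psi> x) = x" "x \<in> S" "orb W x \<inter> A ` E = {}"
  shows "\<forall>y\<in>orb W x. W (A (W y)) = A y"
proof
  fix y assume y: "y \<in> orb W x"
  then have "y \<in> S" using W.orb_subset [OF assms(2)] by blast
  have "A y \<notin> E"
  proof
    assume "A y \<in> E"
    then have "y \<in> A ` E" using A_A [OF \<open>y \<in> S\<close>] by (metis imageI)
    then show False using assms(3) y by blast
  qed
  then show "W (A (W y)) = A y"
    using assms(1) A_in [OF \<open>y \<in> S\<close>] A_A [OF \<psi>_in [OF A_in [OF \<open>y \<in> S\<close>]]] by (simp add: W_def)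
qed

lemma image_A_avoiding_cycle:
  assumes "\<forall>x\<in>S - E. \<psi> (\<psi> x) = x" "x \<in> S" "orb W x \<inter> A ` E = {}"
  shows "A ` orb W x = orb W (A x)"
  using A_reverses_avoiding_cycle [OF assms] assms(2)
  by (intro image_orb_if_reversing [OF W.finite_bij_axioms W.finite_bij_axioms]) (simp_all add: A_in)

text \<open>A reversal of a cycle without fixed points fixes two of its edges \<open>{y, W y}\<close>;
  each of them gives a fixed point \<open>A y = W y = \<psi> (A y)\<close> of \<open>\<psi>\<close>.\<close>
lemma image_A_avoiding_cycle_neq:
  assumes "\<forall>x\<in>S - E. \<psi> (\<psi> x) = x" "x \<in> S" "orb W x \<inter> A ` E = {}"
    and fixed_unique: "\<forall>x\<in>S. \<forall>y\<in>S. \<psi> x = x \<longrightarrow> \<psi> y = y \<longrightarrow> x = y"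
  shows "A ` orb W x \<noteq> orb W x"
proof
  assume "A ` orb W x = orb W x"
  then have "A x \<in> orb W x" using self_in_orb [of x W] by (metis imageI)
  have in_S: "y \<in> S" if "y \<in> orb W x" for y using W.orb_subset [OF assms(2)] that by blast
  have "\<forall>y\<in>orb W x. A y \<noteq> y" "\<forall>y\<in>S. A y \<in> S" using A_neq A_in in_S by simp_all
  with \<open>A x \<in> orb W x\<close> obtain y y' where y: "y \<in> orb W x" "y' \<in> orb W x" "y \<noteq> y'" "A y = W y" "A y' = W y'"
    using W.reversal_two_fixed_edges [OF assms(2) _ A_reverses_avoiding_cycle [OF assms(1-3)]] by metis
  then have "\<psi> (A y) = A y" "\<psi> (A y') = A y'" by (simp_all add: W_def)
  then have "A y = A y'" using fixed_unique A_in in_S y(1,2) by blast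
  then show False using A_cancel in_S y(1-3) by blast
qed

lemma even_card_cycles_avoiding:
  assumes E: "E \<subseteq> S" "\<forall>x\<in>S - E. \<psi> (\<psi> x) = x"
    and fixed_unique: "\<forall>x\<in>S. \<forall>y\<in>S. \<psi> x = x \<longrightarrow> \<psi> y = y \<longrightarrow> x = y"
  shows "even (card {Z \<in> orbits W S. Z \<inter> (E \<union> A ` E) = {} \<and> card Z = n})"
proof -
  define F where "F = {Z \<in> orbits W S. Z \<inter> (E \<union> A ` E) = {}}"
  have "even (card {Z \<in> F. card Z = n})"
  proof (rule even_card_size_class_if_swapped [where R = A and S = S])
    show "\<forall>Z\<in>F. A ` Z \<in> F \<and> A ` Z \<noteq> Z"
    proof (intro ballI conjI)
      fix Z assume "Z \<in> F"
      then obtain x where x: "x \<in> S" "Z = orb W x" and avoid: "Z \<inter> (E \<union> A ` E) = {}"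
        by (auto simp: F_def orbits_def)
      then have "orb W x \<inter> A ` E = {}" by blast
      note image = image_A_avoiding_cycle [OF E(2) x(1) this]
        and neq = image_A_avoiding_cycle_neq [OF E(2) x(1) this fixed_unique]
      have "A z \<notin> E \<union> A ` E" if "z \<in> Z" for z
      proof
        have "z \<in> S" using W.orb_subset [OF x(1)] that x(2) by blast
        assume "A z \<in> E \<union> A ` E"
        then consider "A z \<in> E" | e where "e \<in> E" "A z = A e" by blast
        then show False
        proof cases
          case 1
          then have "A (A z) \<in> A ` E" by (rule imageI)
          then show False using A_A [OF \<open>z \<in> S\<close>] avoid that by auto
        next
          case 2
          then have "z = e" using E(1) by (intro A_cancel [OF \<open>z \<in> S\<close>]) auto
          then show False using avoid that \<open>e \<in> E\<close> by auto
        qed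
      qed
      then have "A ` Z \<inter> (E \<union> A ` E) = {}" by blast
      then show "A ` Z \<in> F" using image x A_in by (simp add: F_def orbits_def)
      show "A ` Z \<noteq> Z" using neq x(2) by simp
    qed
  qed (use finite W.orb_subset A_in A_A in \<open>auto simp: F_def orbits_def\<close>)
  then show ?thesis by (simp add: F_def conj_assoc)
qed

text \<open>\<open>W' = \<psi>\<^sup>-\<^sup>1 A\<close>: \<open>A\<close> conjugates \<open>W\<close> to the inverse of \<open>W'\<close>, and \<open>W'\<close> agrees with \<open>W\<close>
  wherever \<open>\<psi>\<^sup>-\<^sup>1 = \<psi>\<close>.\<close>

definition W' :: "'a \<Rightarrow> 'a" where
  "W' x = inv_into S \<psi> (A x)"

lemma inv_\<psi>: "x \<in> S \<Longrightarrow> inv_into S \<psi> (\<psi> x) = x"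
  using bij_betw_imp_inj_on [OF \<psi>_bij] by (rule inv_into_f_f)

sublocale W': finite_bij W' S
proof
  show "bij_betw W' S S"
    using bij_betw_trans [OF A_bij bij_betw_inv_into [OF \<psi>_bij]]
    by (simp add: W'_def [abs_def] comp_def)
qed (rule finite)

lemma image_A_orb_W: assumes "x \<in> S" shows "A ` orb W x = orb W' (A x)"
proof (rule image_orb_if_reversing [OF W.finite_bij_axioms W'.finite_bij_axioms _ assms])
  show "\<forall>y\<in>orb W x. W' (A (W y)) = A y"
    using W.orb_subset [OF assms] by (auto simp: W_def W'_def A_A \<psi>_in A_in inv_\<psi>)
qed (simp add: A_in)

lemma W'_eq_W: assumes "x \<in> S" "\<psi> (\<psi> (A x)) = A x" shows "W' x = W x"
  using inv_\<psi> [OF \<psi>_in [OF A_in [OF assms(1)]]] assms(2) by (simp add: W_def W'_def)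

lemma card_orb_W'_A: assumes "x \<in> S" shows "card (orb W' (A x)) = card (orb W x)"
proof -
  have "inj_on A (orb W x)"
    using inj_on_subset [OF bij_betw_imp_inj_on [OF A_bij] W.orb_subset [OF assms]] .
  then have "card (A ` orb W x) = card (orb W x)" by (rule card_image)
  then show ?thesis using image_A_orb_W [OF assms] by simp
qed

lemma orb_W_\<psi>: assumes "t \<in> S" shows "orb W (\<psi> t) = orb W (A t)"
proof -
  have "\<psi> t \<in> orb W (A t)" using step_in_orb [of W "A t"] A_A [OF assms] by (simp add: W_def)
  then show ?thesis using W.orb_eq_if_mem [OF A_in [OF assms]] by simp
qed

text \<open>\<open>W'\<close> sends \<open>A t\<^sub>1\<close> to \<open>t\<^sub>3 = W (A t\<^sub>2)\<close> and follows \<open>W\<close> elsewhere on this cycle, so it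
  cuts out the arc from \<open>A t\<^sub>1\<close> to \<open>A t\<^sub>2\<close>.\<close>

lemma card_cycle_shortcut:
  assumes T: "{t1, t2, t3} \<subseteq> S" "t1 \<noteq> t2" "t2 \<noteq> t3" "t3 \<noteq> t1"
    "\<psi> t1 = t2" "\<psi> t2 = t3" "\<psi> t3 = t1" "\<forall>x\<in>S - {t1, t2, t3}. \<psi> (\<psi> x) = x"
    and cycle: "A t2 \<in> orb W (A t1)" "A t3 \<notin> orb W (A t1)"
  shows "card (orb W (A t3)) < card (orb W (A t1))"
proof -
  have t_in: "t1 \<in> S" "t2 \<in> S" "t3 \<in> S" using T(1) by auto
  have same: "orb W (A t2) = orb W (A t1)" by (rule W.orb_eq_if_mem [OF A_in [OF t_in(1)] cycle(1)])
  have agree: "\<forall>y\<in>orb W (A t2). y \<noteq> A t1 \<longrightarrow> y \<noteq> A t2 \<longrightarrow> W' y = W y"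
  proof (intro ballI impI)
    fix y assume y: "y \<in> orb W (A t2)" "y \<noteq> A t1" "y \<noteq> A t2"
    have "y \<in> S" using W.orb_subset [OF A_in [OF t_in(2)]] y(1) by blast
    have "y \<notin> A ` {t1, t2, t3}" using y cycle(2) same by auto
    then have "A y \<notin> {t1, t2, t3}" using A_A [OF \<open>y \<in> S\<close>] by (metis imageI)
    then have "\<psi> (\<psi> (A y)) = A y" using T(8) A_in [OF \<open>y \<in> S\<close>] by simp
    then show "W' y = W y" by (rule W'_eq_W [OF \<open>y \<in> S\<close>])
  qed
  have "A t1 \<in> orb W (A t2)" using same self_in_orb [of "A t1" W] by simp
  moreover have "A t1 \<noteq> A t2" using T(2) A_cancel t_in by blast
  moreover have "W' (A t1) = W (A t2)" using T(5-7) t_in inv_\<psi> [of t3] by (simp add: W_def W'_def A_A)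
  ultimately obtain b where "0 < b" "b < period W (A t2)" "(W' ^^ b) (A t1) = A t1"
    by (rule W.shortcut_returns [OF A_in [OF t_in(2)] _ _ _ agree])
  have "card (orb W (A t3)) = card (orb W' (A t1))"
    using orb_W_\<psi> [OF t_in(3)] card_orb_W'_A [OF t_in(1)] T(7) by simp
  also have "\<dots> \<le> b"
    using W'.card_orb [OF A_in [OF t_in(1)]] period_le [OF \<open>0 < b\<close> \<open>(W' ^^ b) _ = _\<close>] by simp
  also have "\<dots> < card (orb W (A t1))"
    using \<open>b < _\<close> W.card_orb [OF A_in [OF t_in(2)]] same by simp
  finally show ?thesis .
qed

lemma cycles_meeting_3_cycle:
  assumes "{t1, t2, t3} \<subseteq> S" "\<psi> t1 = t2" "\<psi> t2 = t3" "\<psi> t3 = t1"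
  shows "{Z \<in> orbits W S. Z \<inter> ({t1, t2, t3} \<union> A ` {t1, t2, t3}) \<noteq> {}}
    = {orb W (A t1), orb W (A t2), orb W (A t3)}"
proof (intro equalityI subsetI)
  let ?T = "{t1, t2, t3}"
  have t_in: "t1 \<in> S" "t2 \<in> S" "t3 \<in> S" using assms(1) by auto
  fix Z assume "Z \<in> {Z \<in> orbits W S. Z \<inter> (?T \<union> A ` ?T) \<noteq> {}}"
  then obtain x z where "x \<in> S" "Z = orb W x" "z \<in> Z" "z \<in> ?T \<union> A ` ?T"
    by (auto simp: orbits_def)
  then have "Z = orb W z" "z \<in> ?T \<union> A ` ?T" using W.orb_eq_if_mem by auto
  then show "Z \<in> {orb W (A t1), orb W (A t2), orb W (A t3)}"
    using orb_W_\<psi> [of t3] orb_W_\<psi> [of t1] orb_W_\<psi> [of t2] assms(2-4) t_in by auto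
next
  fix Z assume "Z \<in> {orb W (A t1), orb W (A t2), orb W (A t3)}"
  then show "Z \<in> {Z \<in> orbits W S. Z \<inter> ({t1, t2, t3} \<union> A ` {t1, t2, t3}) \<noteq> {}}"
    using assms(1) A_in self_in_orb [of "A t1" W] self_in_orb [of "A t2" W] self_in_orb [of "A t3" W]
    by (auto simp: orbits_def)
qed

lemma even_size_classes_3_cycle:
  assumes Q: "\<forall>x\<in>S. Q x \<in> S \<and> Q (Q x) = x \<and> Q x \<noteq> x \<and> Q x \<noteq> W x \<and> W (Q (W x)) = Q x"
    and fixed_unique: "\<forall>x\<in>S. \<forall>y\<in>S. \<psi> x = x \<longrightarrow> \<psi> y = y \<longrightarrow> x = y"
    and T: "{t1, t2, t3} \<subseteq> S" "\<psi> t1 = t2" "\<psi> t2 = t3" "\<psi> t3 = t1"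
      "\<forall>x\<in>S - {t1, t2, t3}. \<psi> (\<psi> x) = x"
  shows "even (card {Z \<in> {orb W (A t1), orb W (A t2), orb W (A t3)}. card Z = n})"
proof -
  let ?E = "{t1, t2, t3} \<union> A ` {t1, t2, t3}" and ?B = "{orb W (A t1), orb W (A t2), orb W (A t3)}"
  have "finite (orbits W S)" using finite by (simp add: orbits_def)
  have "{Z \<in> orbits W S. card Z = n} = {Z \<in> orbits W S. Z \<inter> ?E = {} \<and> card Z = n} \<union> {Z \<in> ?B. card Z = n}"
    "{Z \<in> orbits W S. Z \<inter> ?E = {} \<and> card Z = n} \<inter> {Z \<in> ?B. card Z = n} = {}"
    unfolding cycles_meeting_3_cycle [OF T(1-4), symmetric] by auto
  then have "card {Z \<in> orbits W S. card Z = n}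
      = card {Z \<in> orbits W S. Z \<inter> ?E = {} \<and> card Z = n} + card {Z \<in> ?B. card Z = n}"
    using \<open>finite (orbits W S)\<close> by (simp add: card_Un_disjoint)
  then show ?thesis
    using even_card_cycles_if_reversed [OF Q, of n] even_card_cycles_avoiding [OF T(1) T(5) fixed_unique, of n]
    by simp
qed

lemma no_reversing_involution:
  assumes Q: "\<forall>x\<in>S. Q x \<in> S \<and> Q (Q x) = x \<and> Q x \<noteq> x \<and> Q x \<noteq> W x \<and> W (Q (W x)) = Q x"
    and fixed_unique: "\<forall>x\<in>S. \<forall>y\<in>S. \<psi> x = x \<longrightarrow> \<psi> y = y \<longrightarrow> x = y"
    and T: "{t1, t2, t3} \<subseteq> S" "t1 \<noteq> t2" "t2 \<noteq> t3" "t3 \<noteq> t1"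
      "\<psi> t1 = t2" "\<psi> t2 = t3" "\<psi> t3 = t1" "\<forall>x\<in>S - {t1, t2, t3}. \<psi> (\<psi> x) = x"
  shows False
proof -
  define X where "X t = orb W (A t)" for t
  have shorter: "card (X u3) < card (X u1)"
    if rot: "(u1, u2, u3) \<in> {(t1, t2, t3), (t2, t3, t1), (t3, t1, t2)}" and "X u1 = X u2" "X u3 \<noteq> X u1"
    for u1 u2 u3
  proof -
    have u_in: "u1 \<in> S" using rot T(1) by auto
    have in_orb: "A u2 \<in> orb W (A u1)" using \<open>X u1 = X u2\<close> self_in_orb [of "A u2" W] by (simp add: X_def)
    have not_in_orb: "A u3 \<notin> orb W (A u1)"
      using \<open>X u3 \<noteq> X u1\<close> W.orb_eq_if_mem [OF A_in [OF u_in]] by (auto simp: X_def)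
    have u: "{u1, u2, u3} = {t1, t2, t3}" "u1 \<noteq> u2" "u2 \<noteq> u3" "u3 \<noteq> u1"
      "\<psi> u1 = u2" "\<psi> u2 = u3" "\<psi> u3 = u1"
      using rot T(2-7) by (auto simp: insert_commute)
    have "{u1, u2, u3} \<subseteq> S" "\<forall>x\<in>S - {u1, u2, u3}. \<psi> (\<psi> x) = x"
      unfolding u(1) by (fact T(1), fact T(8))
    from card_cycle_shortcut [OF this(1) u(2-7) this(2) in_orb not_in_orb]
    show ?thesis unfolding X_def .
  qed
  have "\<forall>n. even (card {Z \<in> {X t1, X t2, X t3}. card Z = n})"
    using even_size_classes_3_cycle [OF Q fixed_unique T(1,5-8)] by (simp add: X_def)
  then consider "X t1 = X t2" "X t3 \<noteq> X t1" "card (X t3) = card (X t1)"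
    | "X t2 = X t3" "X t1 \<noteq> X t2" "card (X t1) = card (X t2)"
    | "X t3 = X t1" "X t2 \<noteq> X t3" "card (X t2) = card (X t3)"
    by (blast dest: three_sets_even_size_classes)
  then show False
  proof cases
    case 1
    then show False using shorter [of t1 t2 t3] by simp
  next
    case 2
    then show False using shorter [of t2 t3 t1] by simp
  next
    case 3
    then show False using shorter [of t3 t1 t2] by simp
  qed
qed
end

section \<open>Alternating colourings of quadrangulations\<close>

lemma funpow_alternating:
  assumes "\<forall>d\<in>S. g d \<in> S \<and> c (g d) \<noteq> c d" "d \<in> S"
  shows "(g ^^ j) d \<in> S \<and> (c ((g ^^ j) d) \<longleftrightarrow> (c d \<longleftrightarrow> even j))"
  using assms by (induction j) auto

locale alternating_quadrangulation =
  fixes D :: "'a set" and \<alpha> \<sigma> :: "'a \<Rightarrow> 'a" and c :: "'a \<Rightarrow> bool"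
  assumes map: "comb_map D \<alpha> \<sigma>"
    and quad: "quadrangulation D \<alpha> \<sigma>"
    and alternating: "face_alternating_2col D \<alpha> \<sigma> c"
begin

abbreviation \<phi> :: "'a \<Rightarrow> 'a" where
  "\<phi> \<equiv> face_perm \<alpha> \<sigma>"

definition S :: "'a set" where
  "S = {d \<in> D. c d}"

lemma \<alpha>_in: "d \<in> D \<Longrightarrow> \<alpha> d \<in> D"
  and \<alpha>_neq: "d \<in> D \<Longrightarrow> \<alpha> d \<noteq> d"
  and \<alpha>_\<alpha>: "d \<in> D \<Longrightarrow> \<alpha> (\<alpha> d) = d"
  using map by (auto simp: comb_map_def)

sublocale \<sigma>: finite_bij \<sigma> D
  using map by unfold_locales (auto simp: comb_map_def)

sublocale \<phi>: finite_bij \<phi> D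
proof
  have "bij_betw \<alpha> D D" by (rule bij_betw_byWitness [where f' = \<alpha>]) (auto simp: \<alpha>_in \<alpha>_\<alpha>)
  then show "bij_betw \<phi> D D"
    using bij_betw_trans \<sigma>.bij by (simp add: face_perm_def)
qed (rule \<sigma>.finite)

lemma c_\<alpha>: "d \<in> D \<Longrightarrow> c (\<alpha> d) = c d"
  and c_\<phi>: "d \<in> D \<Longrightarrow> c (\<phi> d) \<noteq> c d"
  using alternating by (auto simp: face_alternating_2col_def)

lemma c_\<sigma>: assumes "d \<in> D" shows "c (\<sigma> d) \<noteq> c d"
proof -
  have "\<sigma> d = \<phi> (\<alpha> d)" using \<alpha>_\<alpha> [OF assms] by (simp add: face_perm_def)
  then show ?thesis using c_\<phi> [OF \<alpha>_in [OF assms]] c_\<alpha> [OF assms] by simp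
qed

lemma \<sigma>_funpow_colour: "d \<in> D \<Longrightarrow> (\<sigma> ^^ j) d \<in> D \<and> (c ((\<sigma> ^^ j) d) \<longleftrightarrow> (c d \<longleftrightarrow> even j))"
  using c_\<sigma> \<sigma>.in_S by (intro funpow_alternating) auto

lemma \<phi>_funpow_colour: "d \<in> D \<Longrightarrow> (\<phi> ^^ j) d \<in> D \<and> (c ((\<phi> ^^ j) d) \<longleftrightarrow> (c d \<longleftrightarrow> even j))"
  using c_\<phi> \<phi>.in_S by (intro funpow_alternating) auto

lemma period_\<phi>: "d \<in> D \<Longrightarrow> period \<phi> d = 4"
  using quad \<phi>.card_orb by (auto simp: quadrangulation_def orbits_def)

sublocale colour: dart_system S \<alpha> "\<sigma> ^^ 2"
proof
  have "(\<sigma> ^^ 2) ` S \<subseteq> S" using \<sigma>_funpow_colour by (auto simp: S_def)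
  moreover have "inj_on (\<sigma> ^^ 2) S" using \<sigma>.inj_on_funpow by (rule inj_on_subset) (auto simp: S_def)
  moreover have "finite S" using \<sigma>.finite by (simp add: S_def)
  ultimately show "bij_betw (\<sigma> ^^ 2) S S" by (simp add: bij_betw_def endo_inj_surj)
qed (use \<sigma>.finite \<alpha>_in \<alpha>_neq \<alpha>_\<alpha> c_\<alpha> in \<open>auto simp: S_def\<close>)

lemma \<phi>_4: assumes "d \<in> D" shows "\<phi> (\<phi> (\<phi> (\<phi> d))) = d"
  using \<phi>.funpow_eq_self_iff [OF assms, of 4] period_\<phi> [OF assms] by (simp add: numeral_eq_Suc)

lemma colour_W_eq: "colour.W x = \<sigma> (\<phi> x)"
  unfolding colour.W_def by (simp add: face_perm_def numeral_2_eq_2)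

lemma face_square_reverses_W:
  assumes "x \<in> S"
  shows "(\<phi> ^^ 2) x \<in> S \<and> (\<phi> ^^ 2) ((\<phi> ^^ 2) x) = x \<and> (\<phi> ^^ 2) x \<noteq> x
    \<and> (\<phi> ^^ 2) x \<noteq> colour.W x \<and> colour.W ((\<phi> ^^ 2) (colour.W x)) = (\<phi> ^^ 2) x"
proof -
  have x: "x \<in> D" "\<phi> x \<in> D" using assms \<phi>.in_S by (simp_all add: S_def)
  have \<phi>2: "(\<phi> ^^ 2) y = \<phi> (\<phi> y)" for y by (simp add: numeral_2_eq_2)
  have "(\<phi> ^^ 2) x \<in> S" using \<phi>_funpow_colour [OF x(1), of 2] assms by (simp add: S_def)
  moreover have "(\<phi> ^^ 2) x \<noteq> x"
    using \<phi>.funpow_eq_self_iff [OF x(1), of 2] period_\<phi> [OF x(1)] by simp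
  moreover have "\<phi> (\<phi> x) \<noteq> \<sigma> (\<phi> x)"
  proof
    assume "\<phi> (\<phi> x) = \<sigma> (\<phi> x)"
    then have "\<sigma> (\<alpha> (\<phi> x)) = \<sigma> (\<phi> x)" by (simp add: face_perm_def)
    then have "\<alpha> (\<phi> x) = \<phi> x" by (rule \<sigma>.cancel [OF \<alpha>_in [OF x(2)] x(2)])
    then show False using \<alpha>_neq [OF x(2)] by simp
  qed
  moreover have "\<sigma> (\<phi> (\<phi> (\<phi> (\<sigma> (\<phi> x))))) = \<phi> (\<phi> x)"
  proof -
    define z where "z = \<sigma> (\<phi> x)"
    have z: "z \<in> D" using x(2) \<sigma>.in_S by (simp add: z_def)
    have "\<phi> (\<alpha> (\<phi> x)) = z" using \<alpha>_\<alpha> [OF x(2)] by (simp add: z_def face_perm_def)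
    then have "\<phi> (\<phi> (\<phi> (\<phi> z))) = \<phi> (\<alpha> (\<phi> x))" using \<phi>_4 [OF z] by simp
    moreover have "\<phi> (\<phi> (\<phi> z)) \<in> D" using z \<phi>.in_S by simp
    ultimately have "\<phi> (\<phi> (\<phi> z)) = \<alpha> (\<phi> x)" using \<phi>.cancel \<alpha>_in [OF x(2)] by simp
    then have "\<sigma> (\<phi> (\<phi> (\<phi> z))) = \<sigma> (\<alpha> (\<phi> x))" by simp
    also have "\<dots> = \<phi> (\<phi> x)" by (simp add: face_perm_def)
    finally show ?thesis by (simp add: z_def)
  qed
  ultimately show ?thesis using \<phi>_4 [OF x(1)] by (simp add: \<phi>2 colour_W_eq)
qed

lemma vertex_degrees:
  assumes "degrees_2_6 D \<sigma>"
  obtains u w where "u \<in> D" "w \<in> D" "period \<sigma> u = 2" "period \<sigma> w = 6"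
    "\<And>d. d \<in> D \<Longrightarrow> d \<notin> orb \<sigma> u \<Longrightarrow> d \<notin> orb \<sigma> w \<Longrightarrow> period \<sigma> d = 4"
proof -
  obtain u w where uw: "u \<in> D" "w \<in> D" "card (orb \<sigma> u) = 2" "card (orb \<sigma> w) = 6"
    and others: "\<forall>v\<in>orbits \<sigma> D. v \<noteq> orb \<sigma> u \<longrightarrow> v \<noteq> orb \<sigma> w \<longrightarrow> card v = 4"
    using assms by (auto simp: degrees_2_6_def orbits_def)
  show ?thesis
  proof (rule that [OF uw(1,2)])
    show "period \<sigma> u = 2" "period \<sigma> w = 6" using uw \<sigma>.card_orb by simp_all
    fix d assume d: "d \<in> D" "d \<notin> orb \<sigma> u" "d \<notin> orb \<sigma> w"
    then have "orb \<sigma> d \<noteq> orb \<sigma> u" "orb \<sigma> d \<noteq> orb \<sigma> w" using self_in_orb by metis+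
    then show "period \<sigma> d = 4" using others \<sigma>.card_orb d(1) by (auto simp: orbits_def)
  qed
qed

lemma same_colour_in_orb:
  assumes "t \<in> D" "x \<in> orb \<sigma> t" "c x = c t"
  obtains k where "2 * k < period \<sigma> t" "x = (\<sigma> ^^ (2 * k)) t"
proof -
  obtain j where j: "j < period \<sigma> t" "x = (\<sigma> ^^ j) t"
    using assms(2) \<sigma>.orb_eq_image_period [OF assms(1)] by auto
  then have "even j" using \<sigma>_funpow_colour [OF assms(1), of j] assms(3) by (cases "c t") simp_all
  with j show ?thesis using that [of "j div 2"] by simp
qed

lemma fixed_dart_unique:
  assumes "degrees_2_6 D \<sigma>" "x \<in> S" "y \<in> S" "(\<sigma> ^^ 2) x = x" "(\<sigma> ^^ 2) y = y"
  shows "x = y"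
proof -
  obtain u w where uw: "u \<in> D" "w \<in> D" "period \<sigma> u = 2" "period \<sigma> w = 6"
    "\<And>d. d \<in> D \<Longrightarrow> d \<notin> orb \<sigma> u \<Longrightarrow> d \<notin> orb \<sigma> w \<Longrightarrow> period \<sigma> d = 4"
    using vertex_degrees [OF assms(1)] by blast
  have on_u: "d \<in> orb \<sigma> u" if "d \<in> D" "(\<sigma> ^^ 2) d = d" for d
  proof (rule ccontr)
    assume "d \<notin> orb \<sigma> u"
    moreover have "period \<sigma> d dvd 2" using that \<sigma>.funpow_eq_self_iff by blast
    then have "period \<sigma> d \<le> 2" by (simp add: dvd_imp_le)
    ultimately show False
      using uw(4,5) that(1) \<sigma>.period_eq_if_mem [OF uw(2)] by force
  qed
  have x: "x \<in> D" "c x" and y: "y \<in> D" "c y" using assms(2,3) by (simp_all add: S_def)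
  have "orb \<sigma> x = orb \<sigma> u" "orb \<sigma> y = orb \<sigma> u"
    using on_u [OF x(1) assms(4)] on_u [OF y(1) assms(5)] \<sigma>.orb_eq_if_mem [OF uw(1)] by simp_all
  then have "y \<in> orb \<sigma> x" using self_in_orb by metis
  moreover have "period \<sigma> x = 2"
    using \<sigma>.period_eq_if_mem [OF uw(1) on_u [OF x(1) assms(4)]] uw(3) by simp
  moreover have "c y = c x" using x(2) y(2) by simp
  ultimately obtain k where "2 * k < 2" "y = (\<sigma> ^^ (2 * k)) x"
    using same_colour_in_orb [OF x(1)] by metis
  then show ?thesis by simp
qed

lemma exceptional_darts:
  assumes "degrees_2_6 D \<sigma>"
  obtains t1 t2 t3 where "{t1, t2, t3} \<subseteq> S" "t1 \<noteq> t2" "t2 \<noteq> t3" "t3 \<noteq> t1"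
    "(\<sigma> ^^ 2) t1 = t2" "(\<sigma> ^^ 2) t2 = t3" "(\<sigma> ^^ 2) t3 = t1"
    "\<forall>x\<in>S - {t1, t2, t3}. (\<sigma> ^^ 2) ((\<sigma> ^^ 2) x) = x"
proof -
  obtain u w where uw: "u \<in> D" "w \<in> D" "period \<sigma> u = 2" "period \<sigma> w = 6"
    "\<And>d. d \<in> D \<Longrightarrow> d \<notin> orb \<sigma> u \<Longrightarrow> d \<notin> orb \<sigma> w \<Longrightarrow> period \<sigma> d = 4"
    using vertex_degrees [OF assms] by blast
  have \<sigma>\<sigma>: "(\<sigma> ^^ m) ((\<sigma> ^^ n) d) = (\<sigma> ^^ (m + n)) d" for m n d
    by (simp add: funpow_add)
  define t1 where "t1 = (if c w then w else \<sigma> w)"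
  have t1_orb: "t1 \<in> orb \<sigma> w"
    using self_in_orb [of w \<sigma>] step_in_orb [of \<sigma> w] by (simp add: t1_def)
  have "t1 \<in> D" using \<sigma>.orb_subset [OF uw(2)] t1_orb by blast
  moreover have "c t1" using c_\<sigma> [OF uw(2)] by (simp add: t1_def)
  moreover have "period \<sigma> t1 = 6" using \<sigma>.period_eq_if_mem [OF uw(2) t1_orb] uw(4) by simp
  moreover have "orb \<sigma> t1 = orb \<sigma> w" by (rule \<sigma>.orb_eq_if_mem [OF uw(2) t1_orb])
  ultimately have t1: "t1 \<in> D" "c t1" "period \<sigma> t1 = 6" "orb \<sigma> t1 = orb \<sigma> w" by simp_all
  define t2 t3 where "t2 = (\<sigma> ^^ 2) t1" and "t3 = (\<sigma> ^^ 4) t1"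
  have returns: "(\<sigma> ^^ k) t1 = t1 \<longleftrightarrow> 6 dvd k" for k
    using \<sigma>.funpow_eq_self_iff [OF t1(1)] t1(3) by simp
  have steps: "(\<sigma> ^^ 2) t1 = t2" "(\<sigma> ^^ 2) t2 = t3" "(\<sigma> ^^ 2) t3 = t1"
    using returns [of 6] by (simp_all add: t2_def t3_def \<sigma>\<sigma>)
  have T: "{t1, t2, t3} \<subseteq> S" using \<sigma>_funpow_colour [OF t1(1)] t1(1,2) by (simp add: S_def t2_def t3_def)
  have neq: "t1 \<noteq> t2" "t3 \<noteq> t1" using returns [of 2] returns [of 4] by (auto simp: t2_def t3_def)
  then have "t2 \<noteq> t3" using steps(2,3) by auto
  have "\<forall>x\<in>S - {t1, t2, t3}. (\<sigma> ^^ 2) ((\<sigma> ^^ 2) x) = x"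
  proof
    fix x assume x: "x \<in> S - {t1, t2, t3}"
    then have "x \<in> D" "c x" by (simp_all add: S_def)
    have "x \<notin> orb \<sigma> w"
    proof
      assume "x \<in> orb \<sigma> w"
      then obtain k where "2 * k < 6" "x = (\<sigma> ^^ (2 * k)) t1"
        using same_colour_in_orb [OF t1(1)] t1(2-4) \<open>c x\<close> by metis
      moreover from this(1) have "k = 0 \<or> k = 1 \<or> k = 2" by auto
      ultimately show False using x by (auto simp: t2_def t3_def)
    qed
    then have "period \<sigma> x = 2 \<or> period \<sigma> x = 4"
      using uw(5) [OF \<open>x \<in> D\<close>] \<sigma>.period_eq_if_mem [OF uw(1), of x] uw(3)
      by (cases "x \<in> orb \<sigma> u") simp_all
    then have "(\<sigma> ^^ 4) x = x" using \<sigma>.funpow_eq_self_iff [OF \<open>x \<in> D\<close>, of 4] by auto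
    then show "(\<sigma> ^^ 2) ((\<sigma> ^^ 2) x) = x" by (simp add: \<sigma>\<sigma>)
  qed
  with T neq(1) \<open>t2 \<noteq> t3\<close> neq(2) steps show ?thesis by (rule that)
qed

end

theorem theorem5:
  fixes D :: "'a set" and \<alpha> \<sigma> :: "'a \<Rightarrow> 'a"
  assumes "torus_map D \<alpha> \<sigma>"
    and "quadrangulation D \<alpha> \<sigma>"
    and "degrees_2_6 D \<sigma>"
  shows "\<not> (\<exists>c. face_alternating_2col D \<alpha> \<sigma> c)"
proof
  assume "\<exists>c. face_alternating_2col D \<alpha> \<sigma> c"
  then obtain c where "face_alternating_2col D \<alpha> \<sigma> c" ..
  moreover have "comb_map D \<alpha> \<sigma>" using assms(1) by (simp add: torus_map_def)
  ultimately interpret alternating_quadrangulation D \<alpha> \<sigma> c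
    using assms(2) by unfold_locales
  obtain t1 t2 t3 where T: "{t1, t2, t3} \<subseteq> S" "t1 \<noteq> t2" "t2 \<noteq> t3" "t3 \<noteq> t1"
    "(\<sigma> ^^ 2) t1 = t2" "(\<sigma> ^^ 2) t2 = t3" "(\<sigma> ^^ 2) t3 = t1"
    "\<forall>x\<in>S - {t1, t2, t3}. (\<sigma> ^^ 2) ((\<sigma> ^^ 2) x) = x"
    by (rule exceptional_darts [OF assms(3)])
  have "\<forall>x\<in>S. \<forall>y\<in>S. (\<sigma> ^^ 2) x = x \<longrightarrow> (\<sigma> ^^ 2) y = y \<longrightarrow> x = y"
    using fixed_dart_unique [OF assms(3)] by blast
  moreover have "\<forall>x\<in>S. (\<phi> ^^ 2) x \<in> S \<and> (\<phi> ^^ 2) ((\<phi> ^^ 2) x) = x \<and> (\<phi> ^^ 2) x \<noteq> x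
      \<and> (\<phi> ^^ 2) x \<noteq> colour.W x \<and> colour.W ((\<phi> ^^ 2) (colour.W x)) = (\<phi> ^^ 2) x"
    using face_square_reverses_W by blast
  ultimately show False by (rule colour.no_reversing_involution [rotated, OF _ T])
qed

end
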